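(* Let $\mathcal{N}=\{1,\ldots,N\}$ be a set of players and $\mathcal{M}=\{1,\ldots,M\}$ a set of channels. Let $\mathcal{G}$ be an arbitrary undirected interference graph on vertex set $\mathcal{N}$ (no self-loops), and for each $n\in\mathcal{N}$ let $\mathcal{J}_n\subseteq\mathcal{N}\setminus\{n\}$ denote the set of neighbors of $n$. Each channel $m$ has a random transmission rate $s_m$ taking values in a finite set of nonnegative rates, and all channels have the same expected rate $\mathbf{E}[s_m]=\bar s$. For $a=(a_1,\ldots,a_N)\in\mathcal{M}^N$ let $c_n(a)=|\{k\in\mathcal{J}_n: a_k=a_n\}|$ and $u_n(a)=\bar s/(1+c_n(a))$. Then for every pure strategy Nash equilibrium $a_{NE}$ of the game in which each player $n$ chooses $a_n\in\mathcal{M}$ to maximize $u_n$, the aggregate utility satisfies $$U(a_{NE})=\sum_{n\in\mathcal{N}}u_n(a_{NE})\ \ge\ \sum_{n\in\mathcal{N}}\frac{\bar s\,M}{M+|\mathcal{J}_n|}.$$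
   Context: A pure strategy Nash equilibrium is a profile $a^*\in\mathcal{M}^N$ such that for every $n\in\mathcal{N}$ and every $a_n\in\mathcal{M}$, $u_n(a_n^*,a_{-n}^* )\ge u_n(a_n,a_{-n}^* )$. The quantity $u_n(a)$ is the expected achievable transmission rate of player $n$: with probability $1/(1+c_n(a))$ it obtains the instantaneous rate of its chosen channel, otherwise $0$. *)

theory Defs
  imports "HOL-Probability.Probability"
begin

text \<open>The interference graph is given by a
  symmetric, irreflexive adjacency relation E on the players; the neighbour set
  of player n is J_n = {k in 1..N. E n k}.\<close>

definition neighbors :: "nat \<Rightarrow> (nat \<Rightarrow> nat \<Rightarrow> bool) \<Rightarrow> nat \<Rightarrow> nat set" where
  "neighbors N E n = {k \<in> {1..N}. E n k}"

definition congestion :: "nat \<Rightarrow> (nat \<Rightarrow> nat \<Rightarrow> bool) \<Rightarrow> (nat \<Rightarrow> nat) \<Rightarrow> nat \<Rightarrow> nat" where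
  "congestion N E a n = card {k \<in> neighbors N E n. a k = a n}"

definition utility :: "real \<Rightarrow> nat \<Rightarrow> (nat \<Rightarrow> nat \<Rightarrow> bool) \<Rightarrow> (nat \<Rightarrow> nat) \<Rightarrow> nat \<Rightarrow> real" where
  "utility sbar N E a n = sbar / (1 + real (congestion N E a n))"

definition is_profile :: "nat \<Rightarrow> nat \<Rightarrow> (nat \<Rightarrow> nat) \<Rightarrow> bool" where
  "is_profile N M a \<longleftrightarrow> (\<forall>k\<in>{1..N}. a k \<in> {1..M})"

definition pure_NE :: "real \<Rightarrow> nat \<Rightarrow> nat \<Rightarrow> (nat \<Rightarrow> nat \<Rightarrow> bool) \<Rightarrow> (nat \<Rightarrow> nat) \<Rightarrow> bool" where
  "pure_NE sbar N M E a \<longleftrightarrow> is_profile N M a \<and>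
     (\<forall>n\<in>{1..N}. \<forall>m\<in>{1..M}. utility sbar N E a n \<ge> utility sbar N E (a(n := m)) n)"

end

theory Submission
  imports Defs
begin

text \<open>At a pure Nash equilibrium no channel is less crowded among player n's neighbours
  than n's own channel, so n's congestion c is at most every channel load. The M loads
  add up to the number of neighbours, hence M c \<le> |J_n|, which is exactly
  sbar / (1 + c) \<ge> sbar M / (M + |J_n|) for sbar \<ge> 0.\<close>

lemma sum_card_fibers:
  assumes "finite A" "finite C" "f ` A \<subseteq> C"
  shows "(\<Sum>c\<in>C. card {x\<in>A. f x = c}) = card A"
  unfolding card_eq_sum by (rule sum.group[OF assms])

lemma card_mult_le_card_if_fibers_ge:
  assumes "finite A" "finite C" "f ` A \<subseteq> C" and fiber_ge: "\<And>c. c \<in> C \<Longrightarrow> k \<le> card {x\<in>A. f x = c}"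
  shows "card C * k \<le> card A"
proof -
  have "card C * k = (\<Sum>c\<in>C. k)" by simp
  also have "\<dots> \<le> (\<Sum>c\<in>C. card {x\<in>A. f x = c})" by (rule sum_mono) (rule fiber_ge)
  also have "\<dots> = card A" by (rule sum_card_fibers[OF assms(1-3)])
  finally show ?thesis .
qed

lemma congestion_fun_upd_self:
  assumes "\<not> E n n"
  shows "congestion N E (a(n := m)) n = card {k \<in> neighbors N E n. a k = m}"
proof -
  have "n \<notin> neighbors N E n" using assms by (simp add: neighbors_def)
  then have "{k \<in> neighbors N E n. (a(n := m)) k = (a(n := m)) n} = {k \<in> neighbors N E n. a k = m}"
    by auto
  then show ?thesis by (simp add: congestion_def)
qed

lemma pure_NE_congestion_le_load:
  assumes "sbar > 0" "\<not> E n n" "pure_NE sbar N M E a" "n \<in> {1..N}" "m \<in> {1..M}"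
  shows "congestion N E a n \<le> card {k \<in> neighbors N E n. a k = m}"
proof -
  have "utility sbar N E (a(n := m)) n \<le> utility sbar N E a n"
    using assms(3-5) by (simp add: pure_NE_def)
  then show ?thesis
    using assms(1,2) by (simp add: utility_def congestion_fun_upd_self field_simps)
qed

lemma pure_NE_congestion_bound:
  assumes "sbar > 0" "\<not> E n n" "pure_NE sbar N M E a" "n \<in> {1..N}"
  shows "M * congestion N E a n \<le> card (neighbors N E n)"
proof -
  have "a ` neighbors N E n \<subseteq> {1..M}"
    using assms(3) by (auto simp: pure_NE_def is_profile_def neighbors_def)
  then show ?thesis
    using card_mult_le_card_if_fibers_ge[of "neighbors N E n" "{1..M}" a]
      pure_NE_congestion_le_load[OF assms] by (simp add: neighbors_def)
qed

lemma pure_NE_utility_ge: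
  assumes "M \<ge> 1" "sbar \<ge> 0" "\<not> E n n" "pure_NE sbar N M E a" "n \<in> {1..N}"
  shows "sbar * real M / (real M + real (card (neighbors N E n))) \<le> utility sbar N E a n"
proof (cases "sbar = 0")
  case True
  then show ?thesis by (simp add: utility_def)
next
  case False
  with assms(2) have "sbar > 0" by simp
  define c where "c = congestion N E a n"
  have "real M * real c \<le> real (card (neighbors N E n))"
    using pure_NE_congestion_bound[OF \<open>sbar > 0\<close> assms(3-5)] unfolding c_def of_nat_mult[symmetric]
    by linarith
  then have "sbar * real M * (1 + real c) \<le> sbar * (real M + real (card (neighbors N E n)))"
    using \<open>sbar > 0\<close> by (simp add: algebra_simps)
  then show ?thesis
    using assms(1) by (simp add: utility_def c_def[symmetric] divide_simps add_pos_nonneg)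
qed

theorem theorem2:
  fixes N M :: nat and E :: "nat \<Rightarrow> nat \<Rightarrow> bool"
    and s :: "nat \<Rightarrow> real pmf" and sbar :: real and a :: "nat \<Rightarrow> nat"
  assumes "M \<ge> 1"
    and sym: "\<And>i j. E i j \<Longrightarrow> E j i"
    and irrefl: "\<And>i. \<not> E i i"
    and fin: "\<And>m. m \<in> {1..M} \<Longrightarrow> finite (set_pmf (s m))"
    and nonneg: "\<And>m x. m \<in> {1..M} \<Longrightarrow> x \<in> set_pmf (s m) \<Longrightarrow> x \<ge> 0"
    and mean: "\<And>m. m \<in> {1..M} \<Longrightarrow> measure_pmf.expectation (s m) (\<lambda>x. x) = sbar"
    and NE: "pure_NE sbar N M E a"
  shows "(\<Sum>n\<in>{1..N}. utility sbar N E a n)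
           \<ge> (\<Sum>n\<in>{1..N}. sbar * real M / (real M + real (card (neighbors N E n))))"
proof -
  have channel_1: "1 \<in> {1..M}" using assms(1) by simp
  have "measure_pmf.expectation (s 1) (\<lambda>x. x) \<ge> 0"
    by (rule integral_nonneg_AE) (use nonneg[OF channel_1] in \<open>auto simp: AE_measure_pmf_iff\<close>)
  then have "sbar \<ge> 0" using mean[OF channel_1] by simp
  then show ?thesis
    by (intro sum_mono pure_NE_utility_ge[OF assms(1) _ irrefl NE]) simp_all
qed

end
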